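(* Let $n$ be even, $1\le\eta\le n/2$, and $p\ge1$ an integer. On the fermionic Fock space on $n$ spin orbitals define $$\widetilde{T}=nN_0,\qquad \widetilde{V}=\frac{1}{n^2}\sum_{j,k,l,m=0}^{n-1}\Big(\sum_{x=0}^{\frac n2-1}e^{\frac{2\pi i x(k-j)}{n}}\Big)\Big(\sum_{y=0}^{\frac n2-1}e^{\frac{2\pi i y(m-l)}{n}}\Big)A_j^\dagger A_kA_l^\dagger A_m,$$ and the $\eta$-electron states $$|\widetilde\psi_\eta\rangle=\tfrac{1}{\sqrt2}\big(|0,1,0,\dots,0,\underbrace{1,\dots,1}_{\eta-1}\rangle+|1,0,0,\dots,0,\underbrace{1,\dots,1}_{\eta-1}\rangle\big),\quad |\widetilde\phi_\eta\rangle=\tfrac{1}{\sqrt2}\big(|0,1,0,\dots,0,\underbrace{1,\dots,1}_{\eta-1}\rangle+i|1,0,0,\dots,0,\underbrace{1,\dots,1}_{\eta-1}\rangle\big),$$ where the last $\eta-1$ modes are occupied. Writing $C_p=[\widetilde T,\ldots[\widetilde T,\widetilde V]]$ with $p$ copies of $\widetilde T$, we have $$|\langle\widetilde\psi_\eta|C_p|\widetilde\psi_\eta\rangle|\ (p\text{ odd}),\qquad |\langle\widetilde\phi_\eta|C_p|\widetilde\phi_\eta\rangle|\ (p\text{ even})\quad=\frac{n^p\eta}{\pi}+O(n^p),$$ with the implied constant depending only on $p$.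
   Context: Fermionic Fock space on $n$ spin orbitals: the $2^n$-dimensional Hilbert space with orthonormal basis $|c_0,c_1,\dots,c_{n-1}\rangle$, $c_j\in\{0,1\}$. Creation operators: $A_j^\dagger|\dots,0_j,\dots\rangle=(-1)^{\sum_{k<j}c_k}|\dots,1_j,\dots\rangle$, $A_j^\dagger|\dots,1_j,\dots\rangle=0$; annihilation operators $A_j=(A_j^\dagger)^\dagger$; $N_j=A_j^\dagger A_j$. An $\eta$-electron state is a unit vector in the span of basis vectors with $\sum_jc_j=\eta$. *)

theory Defs
  imports Complex_Main
begin

text \<open>A basis vector |c_0,...,c_{n-1}> is
  identified with the set of occupied orbitals S, a subset of {..<n}. A state is a
  function from such sets to complex amplitudes (only values on Pow {..<n} matter).\<close>

type_synonym fstate = "nat set \<Rightarrow> complex"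
type_synonym fop = "fstate \<Rightarrow> fstate"

definition fbasis :: "nat set \<Rightarrow> fstate" where
  "fbasis S = (\<lambda>S'. if S' = S then 1 else 0)"

definition finner :: "nat \<Rightarrow> fstate \<Rightarrow> fstate \<Rightarrow> complex" where
  "finner n \<phi> \<psi> = (\<Sum>S\<in>Pow {..<n}. cnj (\<phi> S) * \<psi> S)"

definition adag :: "nat \<Rightarrow> fop" where
  "adag j \<psi> = (\<lambda>S. if j \<in> S then (-1) ^ card {k\<in>S. k < j} * \<psi> (S - {j}) else 0)"

definition fadj :: "nat \<Rightarrow> fop \<Rightarrow> fop" where
  "fadj n T \<psi> = (\<lambda>S. \<Sum>S'\<in>Pow {..<n}. cnj (T (fbasis S) S') * \<psi> S')"

definition ann :: "nat \<Rightarrow> nat \<Rightarrow> fop" where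
  "ann n j = fadj n (adag j)"

definition numop :: "nat \<Rightarrow> nat \<Rightarrow> fop" where
  "numop n j \<psi> = adag j (ann n j \<psi>)"

definition comm :: "fop \<Rightarrow> fop \<Rightarrow> fop" where
  "comm T V \<psi> = (\<lambda>S. T (V \<psi>) S - V (T \<psi>) S)"

definition Ttil :: "nat \<Rightarrow> fop" where
  "Ttil n \<psi> = (\<lambda>S. of_nat n * numop n 0 \<psi> S)"

definition phase_sum :: "nat \<Rightarrow> nat \<Rightarrow> nat \<Rightarrow> complex" where
  "phase_sum n a b = (\<Sum>x<n div 2. exp (2 * complex_of_real pi * \<i> * of_nat x
        * of_int (int b - int a) / of_nat n))"

definition Vtil :: "nat \<Rightarrow> fop" where
  "Vtil n \<psi> = (\<lambda>S. (1 / (of_nat n)^2) *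
     (\<Sum>j<n. \<Sum>k<n. \<Sum>l<n. \<Sum>m<n.
        phase_sum n j k * phase_sum n l m * adag j (ann n k (adag l (ann n m \<psi>))) S))"

definition Cp :: "nat \<Rightarrow> nat \<Rightarrow> fop" where
  "Cp n p = ((comm (Ttil n)) ^^ p) (Vtil n)"

definition cfgA :: "nat \<Rightarrow> nat \<Rightarrow> nat set" where
  "cfgA n \<eta> = {1} \<union> {n + 1 - \<eta>..<n}"

definition cfgB :: "nat \<Rightarrow> nat \<Rightarrow> nat set" where
  "cfgB n \<eta> = {0} \<union> {n + 1 - \<eta>..<n}"

definition psi_til :: "nat \<Rightarrow> nat \<Rightarrow> fstate" where
  "psi_til n \<eta> = (\<lambda>S. (1 / sqrt 2) * (fbasis (cfgA n \<eta>) S + fbasis (cfgB n \<eta>) S))"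

definition phi_til :: "nat \<Rightarrow> nat \<Rightarrow> fstate" where
  "phi_til n \<eta> = (\<lambda>S. (1 / sqrt 2) * (fbasis (cfgA n \<eta>) S + \<i> * fbasis (cfgB n \<eta>) S))"

end

theory Submission
  imports Defs "HOL-Analysis.Complex_Transcendental"
begin

(* T~ = n N_0 is diagonal, with eigenvalue n on configurations containing orbital 0 and 0
   elsewhere, while V~ maps a configuration to a combination of configurations. Hence the p-fold
   commutator C_p has matrix elements <S|C_p|S'> = (t_S - t_S')^p <S|V~|S'>; diagonal ones
   vanish. In the two-configuration states only <A|V~|B> and <B|V~|A> survive, where A and B
   differ by moving one electron between orbitals 0 and 1. Because the phase sums
   f(j,k) = sum_{x<n/2} e^(2 pi i x (k-j)/n) vanish for even nonzero k - j, these elements are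
   eta z/n and eta conj(z)/n with z = f(0,1) = 2/(1 - e^(2 pi i/n)), and Im z = cot(pi/n).
   For the chosen relative phases the expectation value is exactly n^(p-1) eta cot(pi/n), and
   cot x = 1/x + O(x) gives the claim. *)

definition parity_below :: "nat set \<Rightarrow> nat \<Rightarrow> complex" where
  "parity_below S q = (-1) ^ card {i\<in>S. i < q}"

lemma parity_below_remove_self [simp]: "parity_below (S - {q}) q = parity_below S q"
  unfolding parity_below_def by (rule arg_cong[where f = "\<lambda>X. (-1) ^ card X"]) auto

lemma parity_below_square [simp]: "parity_below S q * parity_below S q = 1"
  unfolding parity_below_def by (simp flip: power_add)

lemma parity_below_eq_1:
  assumes "\<And>r. r \<in> S \<Longrightarrow> q \<le> r"
  shows "parity_below S q = 1"
proof -
  have "{i\<in>S. i < q} = {}" using assms by force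
  then show ?thesis unfolding parity_below_def by (simp only: card.empty power_0)
qed

definition adag_coeff :: "nat \<Rightarrow> nat set \<Rightarrow> complex" where
  "adag_coeff j S = (if j \<in> S then parity_below S j else 0)"

definition ann_coeff :: "nat \<Rightarrow> nat \<Rightarrow> nat set \<Rightarrow> complex" where
  "ann_coeff n k S = (if k \<notin> S \<and> insert k S \<subseteq> {..<n} then parity_below S k else 0)"

lemma adag_apply: "adag j \<psi> S = adag_coeff j S * \<psi> (S - {j})"
  by (simp add: adag_def adag_coeff_def parity_below_def)

lemma ann_apply: "ann n k \<psi> S = ann_coeff n k S * \<psi> (insert k S)"
proof -
  have "cnj (adag k (fbasis S) S') * \<psi> S' =
        (if S' = insert k S then (if k \<notin> S then parity_below S k * \<psi> S' else 0) else 0)" for S'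
    by (auto simp: adag_def fbasis_def parity_below_def insert_Diff_if
             intro!: arg_cong[where f = "\<lambda>X. (-1) ^ card X"])
  then show ?thesis
    by (simp add: ann_def fadj_def ann_coeff_def)
qed

section \<open>Commutators with a diagonal operator\<close>

text \<open>An operator of the form \<open>\<psi> \<mapsto> (S \<mapsto> \<Sum>i. c i S * \<psi> (g i S))\<close> has matrix entries
  \<open>c i S\<close> at \<open>(S, g i S)\<close>; commuting with a diagonal operator multiplies each of them by
  the difference of the two eigenvalues.\<close>

lemma comm_diagonal_subst:
  "comm (\<lambda>\<psi> S. d S * \<psi> S) (\<lambda>\<psi> S. \<Sum>i\<in>I. c i S * \<psi> (g i S)) =
   (\<lambda>\<psi> S. \<Sum>i\<in>I. c i S * (d S - d (g i S)) * \<psi> (g i S))"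
  by (auto simp: comm_def sum_distrib_left sum_subtractf[symmetric] algebra_simps
           intro!: ext sum.cong)

lemma funpow_comm_diagonal_subst:
  "(comm (\<lambda>\<psi> S. d S * \<psi> S) ^^ p) (\<lambda>\<psi> S. \<Sum>i\<in>I. c i S * \<psi> (g i S)) =
   (\<lambda>\<psi> S. \<Sum>i\<in>I. c i S * (d S - d (g i S)) ^ p * \<psi> (g i S))"
proof (induction p)
  case (Suc p)
  then show ?case
    using comm_diagonal_subst[where d = d and g = g and I = I
                                and c = "\<lambda>i S. c i S * (d S - d (g i S)) ^ p"]
    by (simp add: mult_ac)
qed simp

definition Ttil_eigenvalue :: "nat \<Rightarrow> nat set \<Rightarrow> complex" where
  "Ttil_eigenvalue n S = (if 0 \<in> S \<and> S \<subseteq> {..<n} then of_nat n else 0)"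

lemma Ttil_diagonal: "Ttil n = (\<lambda>\<psi> S. Ttil_eigenvalue n S * \<psi> S)"
proof (intro ext)
  fix \<psi> S
  have "S - {0} \<subseteq> {..<n} \<and> 0 < n \<longleftrightarrow> S \<subseteq> {..<n}" if "0 \<in> S"
    using that by auto
  then show "Ttil n \<psi> S = Ttil_eigenvalue n S * \<psi> S"
    by (auto simp: Ttil_def numop_def adag_apply ann_apply adag_coeff_def ann_coeff_def
                   Ttil_eigenvalue_def insert_absorb)
qed

definition quadruples :: "nat \<Rightarrow> (nat \<times> nat \<times> nat \<times> nat) set" where
  "quadruples n = {..<n} \<times> {..<n} \<times> {..<n} \<times> {..<n}"

fun Vtil_target :: "nat \<times> nat \<times> nat \<times> nat \<Rightarrow> nat set \<Rightarrow> nat set" where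
  "Vtil_target (j, k, l, m) S = insert m (insert k (S - {j}) - {l})"

fun Vtil_sign :: "nat \<Rightarrow> nat \<times> nat \<times> nat \<times> nat \<Rightarrow> nat set \<Rightarrow> complex" where
  "Vtil_sign n (j, k, l, m) S = adag_coeff j S * ann_coeff n k (S - {j})
     * adag_coeff l (insert k (S - {j})) * ann_coeff n m (insert k (S - {j}) - {l})"

fun Vtil_coeff :: "nat \<Rightarrow> nat \<times> nat \<times> nat \<times> nat \<Rightarrow> nat set \<Rightarrow> complex" where
  "Vtil_coeff n (j, k, l, m) S =
     phase_sum n j k * phase_sum n l m / (of_nat n)^2 * Vtil_sign n (j, k, l, m) S"

lemma Vtil_subst:
  "Vtil n = (\<lambda>\<psi> S. \<Sum>i\<in>quadruples n. Vtil_coeff n i S * \<psi> (Vtil_target i S))"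
proof (intro ext)
  fix \<psi> S
  have "Vtil n \<psi> S = (\<Sum>j<n. \<Sum>k<n. \<Sum>l<n. \<Sum>m<n.
          Vtil_coeff n (j, k, l, m) S * \<psi> (Vtil_target (j, k, l, m) S))"
    by (simp add: Vtil_def adag_apply ann_apply sum_divide_distrib mult_ac)
  also have "\<dots> = (\<Sum>i\<in>quadruples n. Vtil_coeff n i S * \<psi> (Vtil_target i S))"
    unfolding quadruples_def sum.cartesian_product by (rule sum.cong) auto
  finally show "Vtil n \<psi> S = (\<Sum>i\<in>quadruples n. Vtil_coeff n i S * \<psi> (Vtil_target i S))" .
qed

lemma Cp_subst:
  "Cp n p = (\<lambda>\<psi> S. \<Sum>i\<in>quadruples n. Vtil_coeff n i S
     * (Ttil_eigenvalue n S - Ttil_eigenvalue n (Vtil_target i S)) ^ p * \<psi> (Vtil_target i S))"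
  by (simp add: Cp_def Ttil_diagonal Vtil_subst funpow_comm_diagonal_subst)

lemma finner_two_configs:
  assumes "A \<subseteq> {..<n}" "B \<subseteq> {..<n}" "A \<noteq> B"
    and \<phi>: "\<And>X. \<phi> X = (if X = A then \<alpha> else 0) + (if X = B then \<beta> else 0)"
  shows "finner n \<phi> \<psi> = cnj \<alpha> * \<psi> A + cnj \<beta> * \<psi> B"
proof -
  have "finner n \<phi> \<psi> = (\<Sum>S\<in>Pow {..<n}.
          (if S = A then cnj \<alpha> * \<psi> S else 0) + (if S = B then cnj \<beta> * \<psi> S else 0))"
    unfolding finner_def by (rule sum.cong) (auto simp: \<phi> distrib_right)
  then show ?thesis
    using assms(1,2) by (simp add: sum.distrib)
qed

lemma Cp_apply_two_configs:
  assumes "p \<ge> 1" "S \<noteq> T"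
    and \<phi>: "\<And>X. \<phi> X = (if X = S then \<beta> else 0) + (if X = T then \<alpha> else 0)"
  shows "Cp n p \<phi> S = (Ttil_eigenvalue n S - Ttil_eigenvalue n T) ^ p * Vtil n (fbasis T) S * \<alpha>"
  \<comment> \<open>the diagonal contribution carries the factor \<open>0 ^ p = 0\<close>\<close>
proof -
  have "Cp n p \<phi> S = (\<Sum>i\<in>quadruples n. (Ttil_eigenvalue n S - Ttil_eigenvalue n T) ^ p
          * (Vtil_coeff n i S * fbasis T (Vtil_target i S)) * \<alpha>)"
    unfolding Cp_subst
  proof (rule sum.cong)
    fix i
    show "Vtil_coeff n i S * (Ttil_eigenvalue n S - Ttil_eigenvalue n (Vtil_target i S)) ^ p
            * \<phi> (Vtil_target i S)
        = (Ttil_eigenvalue n S - Ttil_eigenvalue n T) ^ p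
            * (Vtil_coeff n i S * fbasis T (Vtil_target i S)) * \<alpha>"
      using assms
      by (cases "Vtil_target i S = T"; cases "Vtil_target i S = S") (auto simp: fbasis_def)
  qed simp
  then show ?thesis
    by (simp add: Vtil_subst sum_distrib_left sum_distrib_right)
qed

lemma Cp_expectation_two_configs:
  assumes "p \<ge> 1" "A \<subseteq> {..<n}" "B \<subseteq> {..<n}" "A \<noteq> B"
    and \<phi>: "\<And>X. \<phi> X = (if X = A then \<alpha> else 0) + (if X = B then \<beta> else 0)"
  shows "finner n \<phi> (Cp n p \<phi>) =
           cnj \<alpha> * \<beta> * (Ttil_eigenvalue n A - Ttil_eigenvalue n B) ^ p * Vtil n (fbasis B) A
         + cnj \<beta> * \<alpha> * (Ttil_eigenvalue n B - Ttil_eigenvalue n A) ^ p * Vtil n (fbasis A) B"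
proof -
  have \<phi>': "\<phi> X = (if X = B then \<beta> else 0) + (if X = A then \<alpha> else 0)" for X
    by (simp add: \<phi>)
  show ?thesis
    using finner_two_configs[OF assms(2-4) \<phi>] Cp_apply_two_configs[OF assms(1,4) \<phi>]
      Cp_apply_two_configs[OF assms(1) assms(4)[symmetric] \<phi>'] by (simp add: mult_ac)
qed

section \<open>The matrix element of the interaction between neighbouring configurations\<close>

text \<open>The four ways in which \<open>A\<^sub>j\<^sup>\<dagger> A\<^sub>k A\<^sub>l\<^sup>\<dagger> A\<^sub>m\<close> can connect \<open>insert a R\<close>
  with \<open>insert b R\<close>: move the electron from \<open>a\<close> to \<open>b\<close> and count an occupied \<open>l\<close>,
  count an occupied \<open>j\<close> and move, move through an empty orbital \<open>k\<close>, or exchange through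
  an occupied \<open>j \<in> R\<close>.\<close>

lemma Vtil_transitions:
  assumes ab: "a \<noteq> b" "a \<notin> R" "b \<notin> R"
    and sign: "Vtil_sign n (j, k, l, m) (insert a R) \<noteq> 0"
    and target: "Vtil_target (j, k, l, m) (insert a R) = insert b R"
  shows "(j = a \<and> k = b \<and> m = l \<and> l \<in> insert b R) \<or> (k = j \<and> j \<in> insert a R \<and> l = a \<and> m = b)
     \<or> (j = a \<and> l = k \<and> m = b \<and> k \<notin> insert a (insert b R)) \<or> (m = j \<and> j \<in> R \<and> k = b \<and> l = a)"
proof -
  let ?U = "insert k (insert a R - {j})"
  have occ: "j \<in> insert a R" "k \<notin> insert a R - {j}" "l \<in> ?U" "m \<notin> ?U - {l}"
    using sign by (auto simp: adag_coeff_def ann_coeff_def split: if_splits)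
  have "a \<notin> insert m (?U - {l})" "b \<in> insert m (?U - {l})"
    "\<And>r. r \<in> R \<Longrightarrow> r \<in> insert m (?U - {l})" "\<And>r. r \<in> insert m (?U - {l}) \<Longrightarrow> r \<in> insert b R"
    using target ab by auto
  then show ?thesis
    using ab occ by (cases "j = a"; cases "l = k"; cases "k = j") auto
qed

lemma Vtil_sign_hop_then_count:
  assumes "a \<noteq> b" "a \<notin> R" "b \<notin> R" "insert a (insert b R) \<subseteq> {..<n}"
    and "\<And>r. r \<in> R \<Longrightarrow> a < r \<and> b < r" and "l \<in> insert b R"
  shows "Vtil_sign n (a, b, l, l) (insert a R) = 1"
proof -
  have "parity_below (insert a R) a = 1" "parity_below R b = 1"
    using assms by (auto intro!: parity_below_eq_1 dest: less_imp_le)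
  then show ?thesis
    using assms by (auto simp: adag_coeff_def ann_coeff_def insert_absorb)
qed

lemma Vtil_sign_count_then_hop:
  assumes "a \<noteq> b" "a \<notin> R" "b \<notin> R" "insert a (insert b R) \<subseteq> {..<n}"
    and "\<And>r. r \<in> R \<Longrightarrow> a < r \<and> b < r" and "j \<in> insert a R"
  shows "Vtil_sign n (j, j, a, b) (insert a R) = 1"
proof -
  have "parity_below (insert a R) a = 1" "parity_below R b = 1"
    using assms by (auto intro!: parity_below_eq_1 dest: less_imp_le)
  moreover have "insert j (insert a R - {j}) = insert a R" "insert a R - {a} = R"
    using assms by auto
  ultimately show ?thesis
    using assms by (auto simp: adag_coeff_def ann_coeff_def)
qed

text \<open>Only the first two families survive the phase factors; each of their \<open>2 (card R + 1)\<close>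
  terms contributes \<open>phase_sum n a b * (n / 2) / n\<^sup>2\<close>.\<close>

lemma Vtil_matrix_element:
  assumes ab: "a \<noteq> b" "a \<notin> R" "b \<notin> R" "insert a (insert b R) \<subseteq> {..<n}"
    and below: "\<And>r. r \<in> R \<Longrightarrow> a < r \<and> b < r"
    and vanish: "\<And>k. k < n \<Longrightarrow> k \<noteq> a \<Longrightarrow> k \<noteq> b \<Longrightarrow> phase_sum n a k * phase_sum n k b = 0"
    and "even n"
  shows "Vtil n (fbasis (insert b R)) (insert a R)
           = of_nat (card R + 1) * phase_sum n a b / of_nat n"
proof -
  define S where "S = insert a R"
  define T where "T = insert b R"
  define h where "h i = Vtil_coeff n i S * fbasis T (Vtil_target i S)" for i
  define c where "c = phase_sum n a b * of_nat (n div 2) / (of_nat n)^2"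
  define hop_then_count where "hop_then_count l = (a, b, l, l)" for l :: nat
  define count_then_hop where "count_then_hop j = (j, j, a, b)" for j :: nat
  let ?paths = "hop_then_count ` T \<union> count_then_hop ` S"
  have fin: "finite (quadruples n)" and "finite R"
    using ab(4) finite_subset by (auto simp: quadruples_def)
  have paths: "?paths \<subseteq> quadruples n"
    using ab(4) by (auto simp: hop_then_count_def count_then_hop_def S_def T_def quadruples_def)
  have "h (j, k, l, m) = 0" if "(j, k, l, m) \<in> quadruples n - ?paths" for j k l m
  proof (rule ccontr)
    assume "h (j, k, l, m) \<noteq> 0"
    then have "Vtil_sign n (j, k, l, m) S \<noteq> 0" "Vtil_target (j, k, l, m) S = T"
      and phases: "phase_sum n j k * phase_sum n l m \<noteq> 0"
      by (auto simp: h_def fbasis_def split: if_splits)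
    then consider "j = a" "k = b" "m = l" "l \<in> T" | "k = j" "j \<in> S" "l = a" "m = b"
      | "j = a" "l = k" "m = b" "k \<notin> insert a T" | "m = j" "j \<in> R" "k = b" "l = a"
      using Vtil_transitions[OF ab(1-3)] unfolding S_def T_def by blast
    then show False
    proof cases
      case 3
      then show False
        using phases vanish[of k] that by (auto simp: quadruples_def T_def)
    next
      case 4
      then show False
        using phases vanish[of j] that ab by (auto simp: quadruples_def mult.commute)
    qed (use that in \<open>auto simp: hop_then_count_def count_then_hop_def\<close>)
  qed
  then have "sum h (quadruples n) = sum h (hop_then_count ` T) + sum h (count_then_hop ` S)"
    using ab(1) \<open>finite R\<close>
    by (subst sum.mono_neutral_right[OF fin paths], force, subst sum.union_disjoint)
                   (auto simp: hop_then_count_def count_then_hop_def S_def T_def)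
  also have "\<dots> = (\<Sum>l\<in>T. h (hop_then_count l)) + (\<Sum>j\<in>S. h (count_then_hop j))"
    by (subst (1 2) sum.reindex) (auto simp: inj_on_def hop_then_count_def count_then_hop_def)
  also have "\<dots> = (\<Sum>l\<in>T. c) + (\<Sum>j\<in>S. c)"
    using Vtil_sign_hop_then_count[OF ab below] Vtil_sign_count_then_hop[OF ab below] ab
    by (auto intro!: sum.cong simp: h_def c_def hop_then_count_def count_then_hop_def S_def T_def
                                    fbasis_def phase_sum_def insert_absorb)
  also have "\<dots> = of_nat (card R + 1) * phase_sum n a b / of_nat n"
  proof -
    have "card T = card R + 1" "card S = card R + 1"
      using ab \<open>finite R\<close> by (auto simp: S_def T_def)
    moreover obtain m where "n = 2 * m" "m > 0"
      using \<open>even n\<close> ab(4) by (auto elim!: evenE)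
    ultimately show ?thesis
      by (simp add: c_def field_simps power2_eq_square)
  qed
  finally show ?thesis
    by (simp add: Vtil_subst h_def S_def T_def)
qed

section \<open>Phase sums\<close>

definition unit_root :: "nat \<Rightarrow> int \<Rightarrow> complex" where
  "unit_root n d = exp (2 * complex_of_real pi * \<i> * of_int d / of_nat n)"

lemma phase_sum_geometric: "phase_sum n a b = (\<Sum>x<n div 2. unit_root n (int b - int a) ^ x)"
proof -
  have "exp (2 * complex_of_real pi * \<i> * of_nat x * of_int d / of_nat n) = unit_root n d ^ x"
    for x :: nat and d :: int
  proof -
    have "2 * complex_of_real pi * \<i> * of_nat x * of_int d / of_nat n
          = of_nat x * (2 * complex_of_real pi * \<i> * of_int d / of_nat n)"
      by simp
    then show ?thesis
      by (simp only: unit_root_def flip: exp_of_nat_mult)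
  qed
  then show ?thesis
    by (simp only: phase_sum_def)
qed

lemma unit_root_pow_half:
  assumes "even n" "n > 0"
  shows "unit_root n d ^ (n div 2) = exp (complex_of_real pi * \<i> * of_int d)"
proof -
  obtain m where "n = 2 * m" "m > 0"
    using assms by (auto elim!: evenE)
  then show ?thesis
    by (simp add: unit_root_def mult.assoc flip: exp_of_nat_mult)
qed

lemma unit_root_ne_1:
  assumes "d \<noteq> 0" "\<bar>d\<bar> < int n"
  shows "unit_root n d \<noteq> 1"
proof
  assume "unit_root n d = 1"
  then obtain m :: int where "2 * pi * of_int d / real n = of_int (2 * m) * pi"
    unfolding unit_root_def exp_eq_1 by auto
  then have d: "d = m * int n"
    using assms by (simp add: field_simps) (metis of_int_eq_iff of_int_mult of_int_of_nat_eq)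
  then have "m \<noteq> 0"
    using assms by auto
  then have "\<bar>d\<bar> \<ge> int n"
    unfolding d abs_mult by (simp add: mult_le_cancel_right1 abs_if)
  then show False
    using assms by simp
qed

lemma phase_sum_eq_0:
  assumes "even n" "a < n" "b < n" "a \<noteq> b" "even (int b - int a)"
  shows "phase_sum n a b = 0"
proof -
  obtain e where e: "int b - int a = 2 * e"
    using assms(5) by (elim evenE)
  have "exp (complex_of_real pi * \<i> * of_int (int b - int a)) = 1"
    unfolding e exp_eq_1 by (intro conjI exI[of _ e]) simp_all
  moreover have "unit_root n (int b - int a) \<noteq> 1"
    using assms by (intro unit_root_ne_1) auto
  ultimately show ?thesis
    using unit_root_pow_half[OF assms(1)] assms(2)
    by (simp add: phase_sum_geometric sum_gp_strict)
qed

lemma phase_sum_products_vanish: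
  assumes "even n" "odd (a + b)" "a < n" "b < n" "k < n" "k \<noteq> a" "k \<noteq> b"
  shows "phase_sum n a k * phase_sum n k b = 0"
proof (cases "even (int k - int a)")
  case True
  then show ?thesis
    using assms by (simp add: phase_sum_eq_0)
next
  case False
  then have "even (int b - int k)"
    using assms(2) by presburger
  then show ?thesis
    using assms by (simp add: phase_sum_eq_0)
qed

lemma phase_sum_swap: "phase_sum n b a = cnj (phase_sum n a b)"
  unfolding phase_sum_def cnj_sum exp_cnj
  by (rule sum.cong) (simp_all add: field_simps)

lemma Im_phase_sum_0_1:
  assumes "even n" "n \<ge> 2"
  shows "Im (phase_sum n 0 1) = cot (pi / n)"
proof -
  define y where "y = pi / n"
  have root: "unit_root n 1 = exp (\<i> * complex_of_real (2 * y))"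
    unfolding unit_root_def y_def by (rule arg_cong[where f = exp]) (simp add: field_simps)
  have "unit_root n 1 \<noteq> 1"
    using assms by (intro unit_root_ne_1) auto
  moreover have "unit_root n 1 ^ (n div 2) = -1"
    using unit_root_pow_half[OF assms(1), of 1] assms by simp
  ultimately have "phase_sum n 0 1 = 2 / (1 - unit_root n 1)"
    by (simp add: phase_sum_geometric sum_gp_strict)
  moreover have "sin y > 0"
    using assms by (auto simp: y_def field_simps intro!: sin_gt_zero)
  moreover have "Im (2 / (1 - exp (\<i> * complex_of_real (2 * y)))) = cos y / sin y"
  proof -
    have "(1 - (1 - 2 * sin y ^ 2))^2 + (2 * sin y * cos y)^2 = 4 * sin y ^ 2"
      by (simp add: power_mult_distrib cos_squared_eq algebra_simps)
    then have "Im (2 / (1 - exp (\<i> * complex_of_real (2 * y))))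
               = 2 * (2 * sin y * cos y) / (4 * sin y ^ 2)"
      by (simp add: Im_divide Re_exp Im_exp sin_double cos_double_sin)
    with \<open>sin y > 0\<close> show ?thesis
      by (simp add: power2_eq_square)
  qed
  ultimately show ?thesis
    unfolding root y_def[symmetric] cot_def by simp
qed

section \<open>The cotangent near zero\<close>

lemma cos_ge_1_minus_half_square: "1 - x^2 / 2 \<le> cos (x :: real)"
proof -
  have "sin (x / 2) ^ 2 \<le> (x / 2) ^ 2"
    using abs_sin_x_le_abs_x[of "x / 2"] by (simp only: abs_le_square_iff)
  then show ?thesis
    using cos_double_sin[of "x / 2"] by (simp add: power_divide)
qed

lemma sin_ge_x_minus_cube_sixth:
  fixes x :: real
  assumes "0 \<le> x"
  shows "x - x^3 / 6 \<le> sin x"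
proof -
  let ?f = "\<lambda>u. sin u - u + u^3 / 6"
  have "?f 0 \<le> ?f x"
  proof (rule DERIV_nonneg_imp_nondecreasing[OF assms])
    fix u :: real
    have "DERIV ?f u :> cos u - 1 + u^2 / 2"
      by (auto intro!: derivative_eq_intros simp: field_simps power2_eq_square)
    moreover have "cos u - 1 + u^2 / 2 \<ge> 0"
      using cos_ge_1_minus_half_square[of u] by simp
    ultimately show "\<exists>y. DERIV ?f u :> y \<and> y \<ge> 0"
      by blast
  qed
  then show ?thesis
    by simp
qed

lemma cot_minus_inverse_bound:
  fixes x :: real
  assumes "0 < x" "x \<le> 2"
  shows "\<bar>cot x - 1 / x\<bar> \<le> 3 / 2 * x"
proof -
  have "x^3 / 6 \<le> 2 / 3 * x"
    using assms mult_right_mono[of "x^2" 4 x] power_mono[of x 2 2]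
    by (simp add: power3_eq_cube power2_eq_square)
  then have sin_x: "x / 3 \<le> sin x"
    using sin_ge_x_minus_cube_sixth[of x] assms by simp
  have upper: "x * cos x - sin x \<le> x^3 / 2"
  proof -
    have "x * cos x \<le> x" "0 \<le> x^3"
      using assms by (simp_all add: mult_left_le)
    then show ?thesis
      using sin_ge_x_minus_cube_sixth[of x] assms by linarith
  qed
  have lower: "sin x - x * cos x \<le> x^3 / 2"
    using sin_x_le_x[of x] mult_left_mono[OF cos_ge_1_minus_half_square[of x], of x] assms
    by (simp add: algebra_simps power2_eq_square power3_eq_cube)
  have "\<bar>x * cos x - sin x\<bar> \<le> x^3 / 2"
    unfolding abs_le_iff using upper lower by linarith
  also have "\<dots> = 3 / 2 * x * (x * (x / 3))"
    by (simp add: power3_eq_cube)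
  also have "\<dots> \<le> 3 / 2 * x * (x * sin x)"
    using sin_x assms by (intro mult_left_mono) auto
  finally have numerator: "\<bar>x * cos x - sin x\<bar> \<le> 3 / 2 * x * (x * sin x)" .
  have "0 < x * sin x"
    using sin_x assms by simp
  moreover have "cot x - 1 / x = (x * cos x - sin x) / (x * sin x)"
    using sin_x assms by (simp add: cot_def field_simps)
  ultimately show ?thesis
    using numerator by (simp add: abs_divide pos_divide_le_eq)
qed

lemma scaled_cot_error:
  assumes "n \<ge> 2" "2 * \<eta> \<le> n"
  shows "\<bar>real \<eta> / real n * cot (pi / n) - real \<eta> / pi\<bar> \<le> 2"
proof -
  define x where "x = pi / real n"
  have x: "0 < x" "x \<le> 2"
    using assms(1) pi_less_4 by (auto simp: x_def field_simps)
  have "real \<eta> / real n * cot x - real \<eta> / pi = real \<eta> / real n * (cot x - 1 / x)"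
    using assms(1) by (simp add: x_def field_simps)
  then have "\<bar>real \<eta> / real n * cot x - real \<eta> / pi\<bar> = real \<eta> / real n * \<bar>cot x - 1 / x\<bar>"
    by (simp add: abs_mult)
  also have "\<dots> \<le> 1 / 2 * (3 / 2 * x)"
    using assms cot_minus_inverse_bound[OF x] by (intro mult_mono) (auto simp: field_simps)
  also have "\<dots> \<le> 2"
    using x by simp
  finally show ?thesis
    by (simp add: x_def)
qed

lemma Cp_expectation_cfgA_cfgB:
  assumes "even n" "1 \<le> \<eta>" "\<eta> \<le> n div 2" "p \<ge> 1"
    and \<phi>: "\<And>X. \<phi> X = (if X = cfgA n \<eta> then \<alpha> else 0) + (if X = cfgB n \<eta> then \<beta> else 0)"
  defines "w \<equiv> \<alpha> * cnj \<beta> * phase_sum n 0 1"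
  shows "finner n \<phi> (Cp n p \<phi>) = of_nat n ^ p * of_nat \<eta> / of_nat n * (w + (-1) ^ p * cnj w)"
proof -
  define R where "R = {n + 1 - \<eta>..<n}"
  have A: "cfgA n \<eta> = insert 1 R" and B: "cfgB n \<eta> = insert 0 R"
    by (auto simp: cfgA_def cfgB_def R_def)
  have "1 < n"
    using assms(1-3) by auto
  have R: "0 \<notin> R" "1 \<notin> R" "insert 0 (insert 1 R) \<subseteq> {..<n}" "\<And>r. r \<in> R \<Longrightarrow> 0 < r \<and> 1 < r"
    using assms(2,3) \<open>1 < n\<close> by (auto simp: R_def)
  have card_R: "card R + 1 = \<eta>"
    using assms(2,3) by (simp add: R_def)
  have vanish: "phase_sum n 0 k * phase_sum n k 1 = 0" "phase_sum n 1 k * phase_sum n k 0 = 0"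
    if "k < n" "k \<noteq> 0" "k \<noteq> 1" for k
    using that \<open>1 < n\<close> \<open>even n\<close> by (simp_all add: phase_sum_products_vanish)
  have "insert 1 R \<subseteq> {..<n}" "insert 0 R \<subseteq> {..<n}" "insert 1 R \<noteq> insert 0 R"
    using R by auto
  from Cp_expectation_two_configs[OF \<open>p \<ge> 1\<close> this \<phi>[unfolded A B]]
  have "finner n \<phi> (Cp n p \<phi>) =
      cnj \<alpha> * \<beta> * (Ttil_eigenvalue n (insert 1 R) - Ttil_eigenvalue n (insert 0 R)) ^ p
        * Vtil n (fbasis (insert 0 R)) (insert 1 R)
    + cnj \<beta> * \<alpha> * (Ttil_eigenvalue n (insert 0 R) - Ttil_eigenvalue n (insert 1 R)) ^ p
        * Vtil n (fbasis (insert 1 R)) (insert 0 R)" .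
  also have "Vtil n (fbasis (insert 1 R)) (insert 0 R) = of_nat \<eta> * phase_sum n 0 1 / of_nat n"
    unfolding card_R[symmetric] by (rule Vtil_matrix_element) (use R vanish(1) \<open>even n\<close> in auto)
  also have "Vtil n (fbasis (insert 0 R)) (insert 1 R)
               = of_nat \<eta> * cnj (phase_sum n 0 1) / of_nat n"
    unfolding card_R[symmetric] phase_sum_swap[symmetric]
    by (rule Vtil_matrix_element) (use R vanish(2) \<open>even n\<close> in auto)
  also have "Ttil_eigenvalue n (insert 1 R) = 0"
    using R by (simp add: Ttil_eigenvalue_def)
  also have "Ttil_eigenvalue n (insert 0 R) = of_nat n"
    using R by (simp add: Ttil_eigenvalue_def)
  finally show ?thesis
    by (simp add: w_def power_minus[of "of_nat n"] divide_inverse)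
       (simp only: mult_ac distrib_left add_ac)
qed

lemma Cp_expectation_abs_eq_cot:
  assumes "even n" "1 \<le> \<eta>" "\<eta> \<le> n div 2" "p \<ge> 1"
  shows "(if odd p then cmod (finner n (psi_til n \<eta>) (Cp n p (psi_til n \<eta>)))
          else cmod (finner n (phi_til n \<eta>) (Cp n p (phi_til n \<eta>))))
       = real n ^ p * (real \<eta> / real n * cot (pi / n))"
proof -
  define z where "z = phase_sum n 0 1"
  define r :: complex where "r = 1 / sqrt 2"
  define c :: complex where "c = of_nat n ^ p * of_nat \<eta> / of_nat n"
  have "n \<ge> 2"
    using assms by auto
  have r: "cnj r = r" "r * r = 1 / 2"
    by (simp_all add: r_def flip: of_real_mult)
  have Im_z: "Im z = cot (pi / n)"
    unfolding z_def using assms(1) \<open>n \<ge> 2\<close> by (rule Im_phase_sum_0_1)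
  have x: "pi / n \<le> pi / 2" "0 < pi / n"
    by (rule divide_left_mono) (use \<open>n \<ge> 2\<close> in auto)
  then have "0 \<le> cot (pi / n)"
    unfolding cot_def
    by (intro divide_nonneg_pos cos_ge_zero sin_gt_zero) (use x pi_gt_zero in linarith)+
  have "cmod c * \<bar>Im z\<bar> = real n ^ p * (real \<eta> / real n * cot (pi / n))"
    using \<open>0 \<le> cot (pi / n)\<close> by (simp add: c_def Im_z norm_divide norm_mult norm_power)
  moreover have "finner n (psi_til n \<eta>) (Cp n p (psi_til n \<eta>)) = c * (\<i> * of_real (Im z))"
    if "odd p"
  proof -
    have "psi_til n \<eta> X = (if X = cfgA n \<eta> then r else 0) + (if X = cfgB n \<eta> then r else 0)" for X
      by (simp add: psi_til_def fbasis_def r_def)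
    moreover have "r * cnj r * z + (-1) ^ p * cnj (r * cnj r * z) = \<i> * of_real (Im z)"
      using that r by (simp add: complex_eq_iff)
    ultimately show ?thesis
      using Cp_expectation_cfgA_cfgB[OF assms] by (simp add: c_def z_def)
  qed
  moreover have "finner n (phi_til n \<eta>) (Cp n p (phi_til n \<eta>)) = c * of_real (Im z)"
    if "even p"
  proof -
    have "phi_til n \<eta> X
            = (if X = cfgA n \<eta> then r else 0) + (if X = cfgB n \<eta> then \<i> * r else 0)" for X
      by (simp add: phi_til_def fbasis_def r_def add_divide_distrib)
    moreover have "r * cnj (\<i> * r) * z + (-1) ^ p * cnj (r * cnj (\<i> * r) * z) = of_real (Im z)"
    proof -
      have "r * cnj (\<i> * r) = - \<i> * (r * r)"
        using r by simp
      then show ?thesis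
        using that r by (simp add: complex_eq_iff)
    qed
    ultimately show ?thesis
      using Cp_expectation_cfgA_cfgB[OF assms] by (simp add: c_def z_def)
  qed
  ultimately show ?thesis
    by (simp add: norm_mult)
qed

theorem proposition13:
  fixes p :: nat
  assumes "p \<ge> 1"
  shows "\<exists>C::real. \<forall>n \<eta> :: nat. even n \<and> 1 \<le> \<eta> \<and> \<eta> \<le> n div 2 \<longrightarrow>
     \<bar>(if odd p then cmod (finner n (psi_til n \<eta>) (Cp n p (psi_til n \<eta>)))
                 else cmod (finner n (phi_til n \<eta>) (Cp n p (phi_til n \<eta>))))
        - real n ^ p * real \<eta> / pi\<bar> \<le> C * real n ^ p"
proof (intro exI allI impI)
  fix n \<eta> :: nat
  assume "even n \<and> 1 \<le> \<eta> \<and> \<eta> \<le> n div 2"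
  then have n: "even n" "1 \<le> \<eta>" "\<eta> \<le> n div 2"
    by auto
  let ?E = "if odd p then cmod (finner n (psi_til n \<eta>) (Cp n p (psi_til n \<eta>)))
            else cmod (finner n (phi_til n \<eta>) (Cp n p (phi_til n \<eta>)))"
  have "?E - real n ^ p * real \<eta> / pi
        = real n ^ p * (real \<eta> / real n * cot (pi / n) - real \<eta> / pi)"
    by (simp add: Cp_expectation_abs_eq_cot[OF n assms] right_diff_distrib)
  then have "\<bar>?E - real n ^ p * real \<eta> / pi\<bar>
        = real n ^ p * \<bar>real \<eta> / real n * cot (pi / n) - real \<eta> / pi\<bar>"
    by (simp add: abs_mult)
  also have "\<dots> \<le> real n ^ p * 2"
    using n by (intro mult_left_mono scaled_cot_error) auto
  finally show "\<bar>?E - real n ^ p * real \<eta> / pi\<bar> \<le> 2 * real n ^ p"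
    by simp
qed

end
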